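(* The class of coherent compact spaces is not $\omega$-projective: there is a projective system of coherent compact topological spaces, indexed by a directed preordered set with a countable cofinal subset, whose projective limit in the category of topological spaces is not coherent (hence not a coherent compact space).
   Context: A projective system of topological spaces consists of a directed preordered set $(I,\sqsubseteq)$, spaces $X_i$ and continuous maps $p_{ij}\colon X_j\to X_i$ for $i\sqsubseteq j$ with $p_{ii}=\mathrm{id}$ and $p_{ij}\circ p_{jk}=p_{ik}$; its projective limit is its limit in the category of topological spaces. A space is coherent if the intersection of any two compact saturated subsets is compact (saturated = upward closed in the specialization preorder; compactness assumes no separation axiom). *)

theory Defs
  imports "HOL-Analysis.Analysis"
begin

definition specializes :: "'a topology \<Rightarrow> 'a \<Rightarrow> 'a \<Rightarrow> bool" where
  "specializes X x y \<longleftrightarrow> x \<in> topspace X \<and> y \<in> topspace X \<and>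
     (\<forall>U. openin X U \<and> x \<in> U \<longrightarrow> y \<in> U)"

definition saturated_in :: "'a topology \<Rightarrow> 'a set \<Rightarrow> bool" where
  "saturated_in X S \<longleftrightarrow> S \<subseteq> topspace X \<and>
     (\<forall>x y. x \<in> S \<and> specializes X x y \<longrightarrow> y \<in> S)"

definition coherent_space :: "'a topology \<Rightarrow> bool" where
  "coherent_space X \<longleftrightarrow>
     (\<forall>K L. compactin X K \<and> saturated_in X K \<and> compactin X L \<and> saturated_in X L
        \<longrightarrow> compactin X (K \<inter> L))"

definition directed_preorder_on :: "'i set \<Rightarrow> ('i \<Rightarrow> 'i \<Rightarrow> bool) \<Rightarrow> bool" where
  "directed_preorder_on I le \<longleftrightarrow>
     I \<noteq> {} \<and>
     (\<forall>i\<in>I. le i i) \<and>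
     (\<forall>i\<in>I. \<forall>j\<in>I. \<forall>k\<in>I. le i j \<and> le j k \<longrightarrow> le i k) \<and>
     (\<forall>i\<in>I. \<forall>j\<in>I. \<exists>k\<in>I. le i k \<and> le j k)"

definition has_countable_cofinal_subset :: "'i set \<Rightarrow> ('i \<Rightarrow> 'i \<Rightarrow> bool) \<Rightarrow> bool" where
  "has_countable_cofinal_subset I le \<longleftrightarrow>
     (\<exists>C. C \<subseteq> I \<and> countable C \<and> (\<forall>i\<in>I. \<exists>c\<in>C. le i c))"

definition projective_system ::
  "'i set \<Rightarrow> ('i \<Rightarrow> 'i \<Rightarrow> bool) \<Rightarrow> ('i \<Rightarrow> 'a topology) \<Rightarrow> ('i \<Rightarrow> 'i \<Rightarrow> 'a \<Rightarrow> 'a) \<Rightarrow> bool" where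
  "projective_system I le X p \<longleftrightarrow>
     directed_preorder_on I le \<and>
     (\<forall>i\<in>I. \<forall>j\<in>I. le i j \<longrightarrow> continuous_map (X j) (X i) (p i j)) \<and>
     (\<forall>i\<in>I. \<forall>x\<in>topspace (X i). p i i x = x) \<and>
     (\<forall>i\<in>I. \<forall>j\<in>I. \<forall>k\<in>I. le i j \<and> le j k \<longrightarrow>
        (\<forall>x\<in>topspace (X k). p i j (p j k x) = p i k x))"

definition projective_limit ::
  "'i set \<Rightarrow> ('i \<Rightarrow> 'i \<Rightarrow> bool) \<Rightarrow> ('i \<Rightarrow> 'a topology) \<Rightarrow> ('i \<Rightarrow> 'i \<Rightarrow> 'a \<Rightarrow> 'a)
     \<Rightarrow> ('i \<Rightarrow> 'a) topology" where
  "projective_limit I le X p =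
     subtopology (product_topology X I)
       {x \<in> topspace (product_topology X I).
          \<forall>i\<in>I. \<forall>j\<in>I. le i j \<longrightarrow> p i j (x j) = x i}"

end

theory Submission
  imports Defs
begin

text \<open>
  The counterexample lives on two points a, b together with an injective sequence p.
  At stage n the points p 0, ..., p (n - 1) are isolated, while every open set meeting a, b
  or the tail p n, p (n + 1), ... contains the whole tail. Each stage thus has finitely many
  points specialising to all others, so every subset is compact and the stage is coherent.
  The stages get finer with n, so with identity bonding maps the projective limit is the set
  carrying the topology generated by all stages: p converges to both a and b and every p k is
  isolated. This space is T1, so every subset is saturated; the sequence together with a and the
  sequence together with b are compact, but their intersection, the infinite discrete set of
  the p k, is not.
\<close>

lemma specializes_homeomorphic_map:
  assumes f: "homeomorphic_map X Y f" and "x \<in> topspace X" "y \<in> topspace X"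
  shows "specializes Y (f x) (f y) \<longleftrightarrow> specializes X x y"
proof
  assume spec: "specializes Y (f x) (f y)"
  have "y \<in> U" if "openin X U" "x \<in> U" for U
  proof -
    have "openin Y (f ` U)" "f x \<in> f ` U"
      using that f homeomorphic_map_openness_eq by blast+
    then have "f y \<in> f ` U" using spec by (simp add: specializes_def)
    then show "y \<in> U"
      using f homeomorphic_imp_injective_map openin_subset that(1) assms(3)
      by (metis inj_on_image_mem_iff)
  qed
  then show "specializes X x y" using assms by (simp add: specializes_def)
next
  assume spec: "specializes X x y"
  have "f y \<in> V" if "openin Y V" "f x \<in> V" for V
  proof -
    have "openin X {z \<in> topspace X. f z \<in> V}"
      using that f homeomorphic_imp_continuous_map openin_continuous_map_preimage by blast
    then show "f y \<in> V" using spec that assms unfolding specializes_def by blast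
  qed
  then show "specializes Y (f x) (f y)"
    using assms f homeomorphic_imp_surjective_map by (fastforce simp: specializes_def)
qed

lemma saturated_in_homeomorphic_image:
  assumes f: "homeomorphic_map X Y f" and S: "saturated_in X S"
  shows "saturated_in Y (f ` S)"
  unfolding saturated_in_def
proof (intro conjI allI impI)
  have "S \<subseteq> topspace X" using S by (simp add: saturated_in_def)
  then show "f ` S \<subseteq> topspace Y" using f homeomorphic_imp_surjective_map by blast
  fix y' y assume "y' \<in> f ` S \<and> specializes Y y' y"
  then obtain x where x: "x \<in> S" "specializes Y (f x) y" by blast
  then have "y \<in> topspace Y" by (simp add: specializes_def)
  then obtain z where z: "z \<in> topspace X" "y = f z"
    using homeomorphic_imp_surjective_map[OF f] by blast
  have "x \<in> topspace X" using x(1) \<open>S \<subseteq> topspace X\<close> by blast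
  then have "specializes X x z"
    using specializes_homeomorphic_map[OF f _ z(1)] x(2) z(2) by blast
  then show "y \<in> f ` S" using S x(1) z(2) unfolding saturated_in_def by blast
qed

lemma homeomorphic_space_coherent_space:
  assumes "X homeomorphic_space Y"
  shows "coherent_space X \<longleftrightarrow> coherent_space Y"
proof -
  have coherent_if_image_coherent: "coherent_space X'"
    if f: "homeomorphic_map X' Y' f" and Y': "coherent_space Y'"
    for X' :: "'c topology" and Y' :: "'d topology" and f
  proof -
    have "compactin X' (K \<inter> L)"
      if "compactin X' K" "saturated_in X' K" "compactin X' L" "saturated_in X' L" for K L
    proof -
      have sub: "K \<subseteq> topspace X'" "L \<subseteq> topspace X'"
        using that compactin_subset_topspace by blast+
      have "compactin Y' (f ` K \<inter> f ` L)"
        using Y' that f sub homeomorphic_map_compactness saturated_in_homeomorphic_image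
        unfolding coherent_space_def by metis
      moreover have "f ` K \<inter> f ` L = f ` (K \<inter> L)"
        using f sub homeomorphic_imp_injective_map by (metis inj_on_image_Int)
      ultimately show ?thesis
        using f sub homeomorphic_map_compactness by (metis le_infI1)
    qed
    then show ?thesis by (simp add: coherent_space_def)
  qed
  show ?thesis
    using assms coherent_if_image_coherent homeomorphic_space homeomorphic_space_sym by metis
qed

lemma coherent_space_if_all_compactin:
  assumes "\<And>S. S \<subseteq> topspace X \<Longrightarrow> compactin X S"
  shows "coherent_space X"
  unfolding coherent_space_def
proof (intro allI impI)
  fix K L assume "compactin X K \<and> saturated_in X K \<and> compactin X L \<and> saturated_in X L"
  then have "K \<inter> L \<subseteq> topspace X" by (meson compactin_subset_topspace le_infI1)
  then show "compactin X (K \<inter> L)" by (rule assms)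
qed

lemma compactin_generic_point:
  assumes "S \<subseteq> topspace X" "q \<in> S" "\<And>x. x \<in> S \<Longrightarrow> specializes X q x"
  shows "compactin X S"
  unfolding compactin_def
proof (intro conjI allI impI)
  fix \<U> assume \<U>: "(\<forall>U\<in>\<U>. openin X U) \<and> S \<subseteq> \<Union>\<U>"
  then obtain U where "U \<in> \<U>" "q \<in> U" using assms(2) by blast
  then have "S \<subseteq> \<Union>{U}" using \<U> assms(3) by (auto simp: specializes_def)
  then show "\<exists>\<F>. finite \<F> \<and> \<F> \<subseteq> \<U> \<and> S \<subseteq> \<Union>\<F>" using \<open>U \<in> \<U>\<close> by blast
qed (fact assms(1))

lemma saturated_in_t1_space:
  assumes "t1_space X"
  shows "saturated_in X S \<longleftrightarrow> S \<subseteq> topspace X"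
  using assms unfolding saturated_in_def specializes_def t1_space_def by metis

lemma finite_if_compactin_isolated:
  assumes "compactin X S" "\<And>x. x \<in> S \<Longrightarrow> openin X {x}"
  shows "finite S"
proof -
  have "\<forall>U \<in> (\<lambda>x. {x}) ` S. openin X U" "S \<subseteq> \<Union>((\<lambda>x. {x}) ` S)"
    using assms(2) by auto
  then obtain \<F> where "finite \<F>" "\<F> \<subseteq> (\<lambda>x. {x}) ` S" "S \<subseteq> \<Union>\<F>"
    using assms(1) unfolding compactin_def by meson
  then obtain T where "finite T" "\<F> = (\<lambda>x. {x}) ` T"
    by (meson finite_subset_image)
  with \<open>S \<subseteq> \<Union>\<F>\<close> show ?thesis
    using finite_subset by auto
qed

lemma projective_system_identity_chain:
  fixes X :: "nat \<Rightarrow> 'a topology"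
  assumes top: "\<And>i j. topspace (X i) = topspace (X j)"
    and finer: "\<And>i j U. i \<le> j \<Longrightarrow> openin (X i) U \<Longrightarrow> openin (X j) U"
  shows "projective_system UNIV (\<le>) X (\<lambda>i j x. x)"
proof -
  have "continuous_map (X j) (X i) (\<lambda>x. x)" if "i \<le> j" for i j
    unfolding continuous_map_def
  proof (intro conjI allI impI)
    show "(\<lambda>x. x) \<in> topspace (X j) \<rightarrow> topspace (X i)" using top by blast
    fix U assume "openin (X i) U"
    moreover have "{x \<in> topspace (X j). x \<in> U} = U"
      using openin_subset[OF \<open>openin (X i) U\<close>] top by blast
    ultimately show "openin (X j) {x \<in> topspace (X j). x \<in> U}"
      using finer that by simp
  qed
  then show ?thesis
    unfolding projective_system_def directed_preorder_on_def
    by (auto, meson nat_le_linear order_refl)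
qed

lemma homeomorphic_space_projective_limit_identity_chain:
  fixes X :: "nat \<Rightarrow> 'a topology" and T :: "'a topology"
  assumes top: "\<And>n. topspace (X n) = topspace T"
    and coarser: "\<And>n U. openin (X n) U \<Longrightarrow> openin T U"
    and locally: "\<And>U y. openin T U \<Longrightarrow> y \<in> U \<Longrightarrow> \<exists>n V. openin (X n) V \<and> y \<in> V \<and> V \<subseteq> U"
  shows "T homeomorphic_space projective_limit UNIV (\<le>) X (\<lambda>i j x. x)"
proof -
  let ?L = "projective_limit UNIV (\<le>) X (\<lambda>i j x. x)"
  have threads: "z \<in> topspace ?L \<longleftrightarrow> z 0 \<in> topspace T \<and> (\<forall>n. z n = z 0)" for z
  proof -
    have "z \<in> topspace ?L \<longleftrightarrow> (\<forall>n. z n \<in> topspace T) \<and> (\<forall>i j. i \<le> j \<longrightarrow> z j = z i)"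
      unfolding projective_limit_def by (simp add: top PiE_iff)
    then show ?thesis by (metis le0)
  qed
  have thread_constant: "z n = z 0" if "z \<in> topspace ?L" for z n
    using threads that by blast
  have diagonal: "continuous_map T ?L (\<lambda>y _. y)"
    unfolding projective_limit_def continuous_map_in_subtopology continuous_map_componentwise_UNIV
  proof (intro conjI allI)
    show "continuous_map T (X n) (\<lambda>y. y)" for n
      unfolding continuous_map_def
    proof (intro conjI allI impI)
      show "(\<lambda>y. y) \<in> topspace T \<rightarrow> topspace (X n)" using top by blast
      fix U assume "openin (X n) U"
      moreover have "{x \<in> topspace T. x \<in> U} = U"
        using openin_subset[OF \<open>openin (X n) U\<close>] top by blast
      ultimately show "openin T {x \<in> topspace T. x \<in> U}" using coarser by simp
    qed
    show "(\<lambda>y _. y) \<in> topspace T \<rightarrow> {x \<in> topspace (product_topology X UNIV).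
            \<forall>i\<in>UNIV. \<forall>j\<in>UNIV. i \<le> j \<longrightarrow> x j = x i}"
      using top by auto
  qed
  have projection: "continuous_map ?L (X n) (\<lambda>z. z n)" for n
    unfolding projective_limit_def
    by (simp add: continuous_map_from_subtopology continuous_map_product_projection)
  have evaluation: "continuous_map ?L T (\<lambda>z. z 0)"
    unfolding continuous_map_def
  proof (intro conjI allI impI)
    show "(\<lambda>z. z 0) \<in> topspace ?L \<rightarrow> topspace T" using threads by blast
    fix U assume "openin T U"
    show "openin ?L {z \<in> topspace ?L. z 0 \<in> U}"
    proof (subst openin_subopen, intro ballI)
      fix z assume z: "z \<in> {z \<in> topspace ?L. z 0 \<in> U}"
      then obtain n V where V: "openin (X n) V" "z 0 \<in> V" "V \<subseteq> U"
        using locally[OF \<open>openin T U\<close>, of "z 0"] by auto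
      define W where "W = {w \<in> topspace ?L. w n \<in> V}"
      have "openin ?L W"
        unfolding W_def using openin_continuous_map_preimage[OF projection V(1)] .
      moreover have "z \<in> W"
        using z thread_constant[of z n] V(2) by (simp add: W_def)
      moreover have "W \<subseteq> {z \<in> topspace ?L. z 0 \<in> U}"
      proof
        fix w assume "w \<in> W"
        then show "w \<in> {z \<in> topspace ?L. z 0 \<in> U}"
          using thread_constant[of w n] V(3) by (auto simp: W_def)
      qed
      ultimately show "\<exists>W. openin ?L W \<and> z \<in> W \<and> W \<subseteq> {z \<in> topspace ?L. z 0 \<in> U}"
        by blast
    qed
  qed
  have "homeomorphic_maps T ?L (\<lambda>y _. y) (\<lambda>z. z 0)"
    unfolding homeomorphic_maps_def
  proof (intro conjI ballI diagonal evaluation)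
    show "(\<lambda>_. z 0) = z" if "z \<in> topspace ?L" for z
      by (rule ext, rule sym, rule thread_constant[OF that])
  qed simp
  then show ?thesis by (rule homeomorphic_maps_imp_homeomorphic_space)
qed

locale sequence_with_two_limits =
  fixes a b :: 'a and p :: "nat \<Rightarrow> 'a"
  assumes inj_p: "inj p"
    and limits_distinct: "a \<noteq> b"
    and limits_not_in_range: "a \<notin> range p" "b \<notin> range p"
begin

definition points :: "'a set" where
  "points = insert a (insert b (range p))"

definition tail :: "nat \<Rightarrow> 'a set" where
  "tail n = p ` {n..}"

definition stage_open :: "nat \<Rightarrow> 'a set \<Rightarrow> bool" where
  "stage_open n U \<longleftrightarrow> U \<subseteq> points \<and> (U \<inter> insert a (insert b (tail n)) \<noteq> {} \<longrightarrow> tail n \<subseteq> U)"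

definition limit_open :: "'a set \<Rightarrow> bool" where
  "limit_open U \<longleftrightarrow> U \<subseteq> points \<and> (a \<in> U \<or> b \<in> U \<longrightarrow> (\<exists>n. tail n \<subseteq> U))"

lemma tail_antimono: "m \<le> n \<Longrightarrow> tail n \<subseteq> tail m"
  unfolding tail_def by auto

lemma tail_subset_points: "tail n \<subseteq> points"
  unfolding tail_def points_def by auto

lemma istopology_stage_open: "istopology (stage_open n)"
  unfolding istopology_def stage_open_def by blast

lemma istopology_limit_open: "istopology limit_open"
  unfolding istopology_def
proof (intro conjI allI impI)
  fix U V assume U: "limit_open U" and V: "limit_open V"
  show "limit_open (U \<inter> V)"
    unfolding limit_open_def
  proof (intro conjI impI)
    show "U \<inter> V \<subseteq> points" using U by (auto simp: limit_open_def)
    assume "a \<in> U \<inter> V \<or> b \<in> U \<inter> V"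
    then have "a \<in> U \<or> b \<in> U" "a \<in> V \<or> b \<in> V" by auto
    then obtain m n where "tail m \<subseteq> U" "tail n \<subseteq> V"
      using U V unfolding limit_open_def by auto
    then have "tail (max m n) \<subseteq> U \<inter> V"
      using tail_antimono[of m "max m n"] tail_antimono[of n "max m n"] by auto
    then show "\<exists>n. tail n \<subseteq> U \<inter> V" ..
  qed
next
  fix \<U> assume opens: "\<forall>U\<in>\<U>. limit_open U"
  show "limit_open (\<Union>\<U>)"
    unfolding limit_open_def
  proof (intro conjI impI)
    have "U \<subseteq> points" if "U \<in> \<U>" for U
      using opens that by (simp add: limit_open_def)
    then show "\<Union>\<U> \<subseteq> points" by blast
    assume "a \<in> \<Union>\<U> \<or> b \<in> \<Union>\<U>"
    then obtain U where "U \<in> \<U>" "a \<in> U \<or> b \<in> U" by blast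
    moreover obtain n where "tail n \<subseteq> U"
      using opens calculation unfolding limit_open_def by auto
    ultimately show "\<exists>n. tail n \<subseteq> \<Union>\<U>" by blast
  qed
qed

definition stage_topology :: "nat \<Rightarrow> 'a topology" where
  "stage_topology n = topology (stage_open n)"

definition limit_topology :: "'a topology" where
  "limit_topology = topology limit_open"

lemma openin_stage_topology [simp]: "openin (stage_topology n) = stage_open n"
  by (simp add: stage_topology_def istopology_stage_open)

lemma openin_limit_topology [simp]: "openin limit_topology = limit_open"
  by (simp add: limit_topology_def istopology_limit_open)

lemma topspace_stage_topology [simp]: "topspace (stage_topology n) = points"
proof -
  have "stage_open n points" by (simp add: stage_open_def tail_subset_points)
  then show ?thesis
    by (metis openin_stage_topology openin_subset openin_topspace stage_open_def subset_antisym)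
qed

lemma topspace_limit_topology [simp]: "topspace limit_topology = points"
proof -
  have "limit_open points" by (auto simp: limit_open_def tail_subset_points)
  then show ?thesis
    by (metis openin_limit_topology openin_subset openin_topspace limit_open_def subset_antisym)
qed

lemma stage_open_mono: "m \<le> n \<Longrightarrow> stage_open m U \<Longrightarrow> stage_open n U"
  unfolding stage_open_def using tail_antimono by blast

lemma stage_open_imp_limit_open: "stage_open n U \<Longrightarrow> limit_open U"
  unfolding stage_open_def limit_open_def by blast

lemma limit_open_locally_stage_open:
  assumes "limit_open U" "y \<in> U"
  shows "\<exists>n V. stage_open n V \<and> y \<in> V \<and> V \<subseteq> U"
proof (cases "y = a \<or> y = b")
  case True
  then obtain n where "tail n \<subseteq> U" using assms unfolding limit_open_def by blast
  moreover have "stage_open n (insert y (tail n))"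
    using True tail_subset_points by (auto simp: stage_open_def points_def)
  ultimately show ?thesis using assms(2) by blast
next
  case False
  then obtain k where "y = p k" using assms unfolding limit_open_def points_def by blast
  moreover have "p k \<notin> tail (Suc k)" using inj_p by (auto simp: tail_def inj_eq)
  then have "stage_open (Suc k) {p k}"
    using limits_not_in_range by (auto simp: stage_open_def points_def)
  ultimately show ?thesis using assms(2) by blast
qed

lemma specializes_stage_topology:
  "q \<in> tail n \<Longrightarrow> x \<in> tail n \<Longrightarrow> specializes (stage_topology n) q x"
  using tail_subset_points by (auto simp: specializes_def stage_open_def)

lemma compactin_stage_topology:
  assumes "S \<subseteq> points"
  shows "compactin (stage_topology n) S"
proof -
  have "p k \<in> p ` {..<n} \<union> tail n" for k
    by (cases "k < n") (auto simp: tail_def)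
  then have "S - tail n \<subseteq> insert a (insert b (p ` {..<n}))"
    using assms unfolding points_def by blast
  then have "compactin (stage_topology n) (S - tail n)"
    using assms by (intro finite_imp_compactin) (auto intro: finite_subset)
  moreover have "compactin (stage_topology n) (S \<inter> tail n)"
  proof (cases "S \<inter> tail n = {}")
    case False
    then obtain q where "q \<in> S \<inter> tail n" by blast
    then show ?thesis
      using assms specializes_stage_topology by (intro compactin_generic_point) auto
  qed simp
  ultimately have "compactin (stage_topology n) ((S - tail n) \<union> (S \<inter> tail n))"
    by (rule compactin_Un)
  then show ?thesis by (simp add: Un_Diff_Int)
qed

lemma compact_space_stage_topology: "compact_space (stage_topology n)"
  by (simp add: compact_space_def compactin_stage_topology)

lemma coherent_space_stage_topology: "coherent_space (stage_topology n)"
  by (rule coherent_space_if_all_compactin) (simp add: compactin_stage_topology)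

lemma projective_system_stage_topology:
  "projective_system UNIV (\<le>) stage_topology (\<lambda>i j x. x)"
  by (rule projective_system_identity_chain) (simp_all add: stage_open_mono)

lemma limit_topology_homeomorphic_projective_limit:
  "limit_topology homeomorphic_space projective_limit UNIV (\<le>) stage_topology (\<lambda>i j x. x)"
  by (rule homeomorphic_space_projective_limit_identity_chain)
    (simp_all add: stage_open_imp_limit_open limit_open_locally_stage_open)

lemma limitin_limit_topology:
  assumes "e = a \<or> e = b"
  shows "limitin limit_topology p e sequentially"
  unfolding limitin_sequentially
proof (intro conjI allI impI)
  show "e \<in> topspace limit_topology" using assms by (auto simp: points_def)
  fix U assume "openin limit_topology U \<and> e \<in> U"
  then obtain N where "tail N \<subseteq> U" using assms by (auto simp: limit_open_def)
  then show "\<exists>N. \<forall>n\<ge>N. p n \<in> U" by (auto simp: tail_def)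
qed

lemma compactin_limit_topology:
  "e = a \<or> e = b \<Longrightarrow> compactin limit_topology (insert e (range p))"
  by (rule compactin_sequence_with_limit[OF limitin_limit_topology]) (auto simp: points_def)

lemma openin_limit_topology_point: "openin limit_topology {p k}"
  using limits_not_in_range by (auto simp: limit_open_def points_def)

lemma t1_space_limit_topology: "t1_space limit_topology"
  unfolding t1_space_def topspace_limit_topology
proof (intro ballI impI)
  fix x y assume "x \<in> points" "y \<in> points" "x \<noteq> y"
  then consider "x = a \<or> x = b" | k where "x = p k" unfolding points_def by blast
  then show "\<exists>U. openin limit_topology U \<and> x \<in> U \<and> y \<notin> U"
  proof cases
    case 1
    have "\<exists>n. tail n \<subseteq> insert x (range p) - {y}"
    proof (cases "y \<in> range p")
      case True
      then obtain k where "y = p k" by blast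
      then have "tail (Suc k) \<subseteq> insert x (range p) - {y}"
        using inj_p by (auto simp: tail_def inj_eq)
      then show ?thesis by blast
    next
      case False
      then have "tail 0 \<subseteq> insert x (range p) - {y}" by (auto simp: tail_def)
      then show ?thesis by blast
    qed
    then have "limit_open (insert x (range p) - {y})"
      using 1 by (auto simp: limit_open_def points_def)
    then show ?thesis using \<open>x \<noteq> y\<close> by auto
  next
    case 2
    then show ?thesis using openin_limit_topology_point \<open>x \<noteq> y\<close> by blast
  qed
qed

lemma not_coherent_space_limit_topology: "\<not> coherent_space limit_topology"
proof
  assume "coherent_space limit_topology"
  moreover have "compactin limit_topology (insert e (range p))"
    and "saturated_in limit_topology (insert e (range p))" if "e = a \<or> e = b" for e
    using that compactin_limit_topology t1_space_limit_topology saturated_in_t1_space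
      compactin_subset_topspace by blast+
  moreover have "insert a (range p) \<inter> insert b (range p) = range p"
    using limits_distinct by blast
  ultimately have "compactin limit_topology (range p)"
    unfolding coherent_space_def by metis
  then have "finite (range p)"
    using openin_limit_topology_point by (blast intro: finite_if_compactin_isolated)
  then show False using range_inj_infinite[OF inj_p] by contradiction
qed

end

theorem corollary4p7:
  shows "\<exists>(I :: nat set) le (X :: nat \<Rightarrow> nat set set topology) p.
           projective_system I le X p \<and>
           has_countable_cofinal_subset I le \<and>
           (\<forall>i\<in>I. compact_space (X i) \<and> coherent_space (X i)) \<and>
           \<not> coherent_space (projective_limit I le X p)"
proof -
  interpret sequence_with_two_limits "{}" "{{}}" "\<lambda>k. {{k}}"
    by unfold_locales (auto simp: inj_def)
  show ?thesis
  proof (intro exI conjI)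
    show "projective_system UNIV (\<le>) stage_topology (\<lambda>i j x. x)"
      by (rule projective_system_stage_topology)
    show "has_countable_cofinal_subset UNIV ((\<le>) :: nat \<Rightarrow> nat \<Rightarrow> bool)"
      unfolding has_countable_cofinal_subset_def by blast
    show "\<forall>i\<in>UNIV. compact_space (stage_topology i) \<and> coherent_space (stage_topology i)"
      using compact_space_stage_topology coherent_space_stage_topology by blast
    show "\<not> coherent_space (projective_limit UNIV (\<le>) stage_topology (\<lambda>i j x. x))"
      using not_coherent_space_limit_topology limit_topology_homeomorphic_projective_limit
        homeomorphic_space_coherent_space by blast
  qed
qed

end
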